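(* If $(k,\alpha)\in\Upsilon$ and $(w_1,w_2,x,g,t)\in\Gamma(k,\alpha)$, then the right infinite word $w_1w_2xt$ is $\alpha$-power free, i.e. $w_1w_2xt\in L^{\mathbb N,R}_{k,\alpha}$.
   Context: $\Sigma_k$ is an alphabet with $k$ letters. For a nonempty finite word $r$ and a rational $\beta\ge 1$ with $\beta|r|$ an integer, the $\beta$-power $r^\beta$ is the word $rr\cdots rt$ of length $\beta|r|$, where $t$ is a prefix of $r$. For rational $\alpha\ge1$, a word is $\alpha$-power free if it has no factor that is a $\beta$-power with $\beta\ge\alpha$, and $\alpha^+$-power free if it has no factor that is a $\beta$-power with $\beta>\alpha$; "$\alpha$" may denote a rational number or a symbol $\alpha^+$. $L_{k,\alpha}$ is the set of finite $\alpha$-power free words over $\Sigma_k$, and $L^{\mathbb N,R}_{k,\alpha}$ the set of right infinite words over $\Sigma_k$ all of whose finite factors lie in $L_{k,\alpha}$. $\Upsilon$ is the set of pairs: $(k,\alpha)$ with $k=3$ and rational $\alpha>2$; $(k,\alpha)$ with $k>3$ and rational $\alpha\ge2$; $(k,\alpha^+)$ with $k\ge3$ and rational $\alpha\ge2$. $\operatorname{occur}(w,s)$ denotes the number of occurrences of a nonempty word $s$ as a factor of $w$. Prefixes of a word include the empty word (and the word itself if finite). For $(k,\alpha)\in\Upsilon$, $(w_1,w_2,x,g,t)\in\Gamma(k,\alpha)$ means: $w_1,w_2,g\in\Sigma_k^*$; $x\in\Sigma_k$; $w_1w_2xg\in L_{k,\alpha}$; $t\in L^{\mathbb N,R}_{k,\alpha}$;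 $\operatorname{occur}(t,x)=0$; $g$ is a prefix of $t$; $\operatorname{occur}(w_2xgy,xgy)=1$, where $y\in\Sigma_k$ is the letter such that $gy$ is a prefix of $t$; and $\operatorname{occur}(w_2,x)\ge\operatorname{occur}(w_1,x)$. *)

theory Defs
  imports Complex_Main "HOL-Library.Sublist"
begin

text \<open>Letters of the alphabet Sigma_k are the naturals 0..k-1; finite words are lists,
  right infinite words are functions nat => nat.\<close>

text \<open>Exponent: either a rational alpha, or the symbol alpha^+.\<close>
datatype expo = Exact rat | Plus rat

definition is_power :: "nat list \<Rightarrow> rat \<Rightarrow> nat list \<Rightarrow> bool" where
  "is_power r \<beta> u \<longleftrightarrow> r \<noteq> [] \<and> \<beta> \<ge> 1 \<and> of_nat (length u) = \<beta> * of_nat (length r) \<and>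
     (\<exists>m t. m \<ge> 1 \<and> prefix t r \<and> u = concat (replicate m r) @ t)"

definition exceeds :: "rat \<Rightarrow> expo \<Rightarrow> bool" where
  "exceeds \<beta> e = (case e of Exact a \<Rightarrow> \<beta> \<ge> a | Plus a \<Rightarrow> \<beta> > a)"

definition power_free :: "expo \<Rightarrow> nat list \<Rightarrow> bool" where
  "power_free e w \<longleftrightarrow> (\<forall>u r \<beta>. sublist u w \<longrightarrow> is_power r \<beta> u \<longrightarrow> \<not> exceeds \<beta> e)"

definition L :: "nat \<Rightarrow> expo \<Rightarrow> nat list set" where
  "L k e = {w. set w \<subseteq> {..<k} \<and> power_free e w}"

definition LinfR :: "nat \<Rightarrow> expo \<Rightarrow> (nat \<Rightarrow> nat) set" where
  "LinfR k e = {t. (\<forall>i. t i < k) \<and> (\<forall>i j. map t [i..<j] \<in> L k e)}"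

definition Upsilon :: "(nat \<times> expo) set" where
  "Upsilon = {(k, Exact a) | k a. (k = 3 \<and> a > 2) \<or> (k > 3 \<and> a \<ge> 2)}
           \<union> {(k, Plus a) | k a. k \<ge> 3 \<and> a \<ge> 2}"

definition occur :: "nat list \<Rightarrow> nat list \<Rightarrow> nat" where
  "occur w s = card {i. i + length s \<le> length w \<and> take (length s) (drop i w) = s}"

definition conc :: "nat list \<Rightarrow> (nat \<Rightarrow> nat) \<Rightarrow> (nat \<Rightarrow> nat)" where
  "conc u t = (\<lambda>i. if i < length u then u ! i else t (i - length u))"

definition Gamma :: "nat \<Rightarrow> expo \<Rightarrow>
    (nat list \<times> nat list \<times> nat \<times> nat list \<times> (nat \<Rightarrow> nat)) set" where
  "Gamma k e = {(w1, w2, x, g, t).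
      set w1 \<subseteq> {..<k} \<and> set w2 \<subseteq> {..<k} \<and> x < k \<and> set g \<subseteq> {..<k} \<and>
      w1 @ w2 @ [x] @ g \<in> L k e \<and>
      t \<in> LinfR k e \<and>
      (\<forall>i. t i \<noteq> x) \<and>
      g = map t [0..<length g] \<and>
      (let y = t (length g) in occur (w2 @ [x] @ g @ [y]) ([x] @ g @ [y]) = 1) \<and>
      occur w2 [x] \<ge> occur w1 [x]}"

end

theory Submission
  imports Defs
begin

text \<open>Let \<open>W = w1 w2 x t\<close> and let \<open>p\<close> be the position of its displayed \<open>x\<close>, the last
  occurrence of \<open>x\<close> in \<open>W\<close>. On \<open>\<Upsilon>\<close> every forbidden exponent is at least 2, so a forbidden
  factor \<open>W[s..<z)\<close> has a period \<open>q\<close> with \<open>z - s \<ge> 2q\<close>. Factors of \<open>w1 w2 x g\<close> or of \<open>t\<close> are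
  harmless, so the factor covers \<open>p\<close> and all of \<open>x g y\<close>. As \<open>W (p + q) \<noteq> x\<close>, it ends before
  \<open>p + q\<close>, hence starts at or before \<open>p - q\<close>, and periodicity repeats \<open>x g y\<close> at \<open>p - q\<close>. Since
  \<open>x g y\<close> occurs only once in \<open>w2 x g y\<close>, \<open>p - q\<close> lies in \<open>w1\<close>. Then the same argument
  shows that shifting by \<open>-q\<close> maps the occurrences of \<open>x\<close> in \<open>w2 x\<close> injectively to
  occurrences of \<open>x\<close> in \<open>w1\<close>, contradicting \<open>occur w2 x \<ge> occur w1 x\<close>.\<close>

definition period_on :: "(nat \<Rightarrow> 'a) \<Rightarrow> nat \<Rightarrow> nat \<Rightarrow> nat \<Rightarrow> bool" where
  "period_on W s z q \<longleftrightarrow> (\<forall>i. s \<le> i \<longrightarrow> i + q < z \<longrightarrow> W i = W (i + q))"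

lemma sublist_map_upt:
  assumes "sublist u (map f [i..<j])"
  obtains s z where "s \<le> z" "u = map f [s..<z]"
proof -
  obtain ps ss where eq: "map f [i..<j] = ps @ u @ ss" using assms by (auto simp: sublist_def)
  then have len: "j - i = length ps + length u + length ss"
    by (metis length_append length_map length_upt add.assoc)
  have "u = take (length u) (drop (length ps) (map f [i..<j]))" using eq by simp
  also have "\<dots> = map f [i + length ps..<i + length ps + length u]"
  proof (cases "u = []")
    case False
    then have "i + length ps + length u \<le> j" using len by (cases u) auto
    then show ?thesis by (simp add: take_map drop_map take_upt)
  qed simp
  finally show ?thesis using that[of "i + length ps" "i + length ps + length u"] by simp
qed

lemma sublist_map_upt_upt:
  assumes "i \<le> s" "s \<le> z" "z \<le> j"
  shows "sublist (map f [s..<z]) (map f [i..<j])"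
proof -
  have "[i..<j] = [i..<s] @ [s..<z] @ [z..<j]"
    using assms by (metis le_trans upt_add_eq_append le_Suc_ex)
  then show ?thesis unfolding sublist_def by (metis map_append)
qed

lemma is_power_nth_period:
  assumes "is_power r \<beta> u" "i + length r < length u"
  shows "u ! i = u ! (i + length r)"
proof -
  obtain m t where "prefix t r" and u: "u = concat (replicate m r) @ t"
    using assms(1) unfolding is_power_def by blast
  define c where "c = concat (replicate m r)"
  have pre: "prefix u (c @ r)" using \<open>prefix t r\<close> u by (simp add: c_def)
  have comm: "c @ r = r @ c" unfolding c_def by (induction m) auto
  have "u ! i = (c @ r) ! i" and "u ! (i + length r) = (c @ r) ! (i + length r)"
    using pre assms(2) by (metis prefix_def nth_append add_lessD1)+
  moreover have "(c @ r) ! i = (r @ c) ! (i + length r)"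
    using prefix_length_le[OF pre] assms(2) by (simp add: nth_append)
  ultimately show ?thesis using comm by simp
qed

lemma is_power_period_on:
  assumes "is_power r \<beta> (map W [s..<z])"
  shows "period_on W s z (length r)"
  unfolding period_on_def
proof (intro allI impI)
  fix i assume "s \<le> i" "i + length r < z"
  then show "W i = W (i + length r)"
    using is_power_nth_period[OF assms, of "i - s"] by simp
qed

lemma is_power_double_length_le:
  assumes "is_power r \<beta> u" "2 \<le> \<beta>"
  shows "2 * length r \<le> length u"
proof -
  have "of_nat (length u) = \<beta> * of_nat (length r)" using assms(1) by (simp add: is_power_def)
  also have "\<dots> \<ge> 2 * of_nat (length r)" using assms(2) by (simp add: mult_right_mono)
  finally have "(of_nat (2 * length r) :: rat) \<le> of_nat (length u)" by simp
  then show ?thesis by (simp only: of_nat_le_iff)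
qed

lemma period_on_shift_map_upt:
  assumes "period_on W s z q" "s \<le> i" "i + q + n \<le> z"
  shows "map W [i..<i + n] = map W [i + q..<i + q + n]"
proof (rule nth_equalityI)
  fix j assume "j < length (map W [i..<i + n])"
  then show "map W [i..<i + n] ! j = map W [i + q..<i + q + n] ! j"
    using assms unfolding period_on_def by (simp add: ac_simps)
qed simp

lemma period_on_beyond_last_occurrence:
  assumes "period_on W s z q" "s \<le> i" "W i = x" "p < i + q" "\<And>j. p < j \<Longrightarrow> W j \<noteq> x"
  shows "z \<le> i + q"
  using assms unfolding period_on_def by (metis not_le)

lemma occur_eq_1_unique:
  assumes "occur w v = 1"
    and "i + length v \<le> length w" "take (length v) (drop i w) = v"
    and "i' + length v \<le> length w" "take (length v) (drop i' w) = v"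
  shows "i = i'"
  using assms card_1_singletonE unfolding occur_def by (smt (verit) mem_Collect_eq singletonD)

lemma occur_singleton_map_upt:
  "occur (map W [a..<b]) [c] = card {i. a \<le> i \<and> i < b \<and> W i = c}"
proof -
  have "{i. i + length [c] \<le> length (map W [a..<b]) \<and> take (length [c]) (drop i (map W [a..<b])) = [c]}
      = {j. j < b - a \<and> W (a + j) = c}"
    by (auto simp: drop_map take_map)
  moreover have "{i. a \<le> i \<and> i < b \<and> W i = c} = (+) a ` {j. j < b - a \<and> W (a + j) = c}"
    by (auto simp: image_iff) (metis add.commute diff_less_mono le_add_diff_inverse2)
  ultimately show ?thesis unfolding occur_def by (simp add: card_image)
qed

lemma map_upt_eq_take_drop:
  assumes "j \<le> N"
  shows "map f [i..<j] = take (j - i) (drop i (map f [0..<N]))"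
  using assms by (cases "i \<le> j") (simp_all add: take_map drop_map take_upt)

lemma period_on_repeats_window:
  assumes "period_on W s z q" "0 < q" "s + q \<le> p" "a + q \<le> p" "p + n \<le> z"
  shows "occur (map W [a..<p + n]) (map W [p..<p + n]) \<noteq> 1"
proof
  assume once: "occur (map W [a..<p + n]) (map W [p..<p + n]) = 1"
  have shifted: "map W [p - q..<p - q + n] = map W [p..<p + n]"
    using period_on_shift_map_upt[OF assms(1), of "p - q" n] assms by simp
  have "p - q - a = p - a"
    by (rule occur_eq_1_unique[OF once]) (use assms shifted in \<open>simp_all add: take_map drop_map\<close>)
  then show False using assms by simp
qed

lemma period_on_occur_singleton_less:
  assumes per: "period_on W s z q" and "s + 2 * q \<le> z" "s < a" "a \<le> p" "p < a + q" "p < z"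
    and "W p = x" and last: "\<And>j. p < j \<Longrightarrow> W j \<noteq> x"
  shows "occur (map W [a..<p]) [x] < occur (map W [0..<a]) [x]"
proof -
  define A where "A = {i. a \<le> i \<and> i < Suc p \<and> W i = x}"
  define B where "B = {i. i < a \<and> W i = x}"
  have shift_back: "s + q \<le> i \<and> i - q \<in> B" if "i \<in> A" for i
  proof -
    have "z \<le> i + q"
      using period_on_beyond_last_occurrence[OF per, of i x p] that last assms(3,5)
      by (auto simp: A_def)
    moreover have "W (i - q) = W (i - q + q)"
      using per \<open>z \<le> i + q\<close> assms(2) that \<open>p < z\<close> unfolding period_on_def A_def by auto
    ultimately show ?thesis using that assms(2,5) by (auto simp: A_def B_def)
  qed
  have "inj_on (\<lambda>i. i - q) A"
  proof (rule inj_onI)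
    fix i j assume "i \<in> A" "j \<in> A" "i - q = j - q"
    with shift_back[of i] shift_back[of j] show "i = j" by arith
  qed
  then have "card A \<le> card B"
    by (rule card_inj_on_le) (use shift_back in \<open>auto simp: B_def\<close>)
  moreover have "A = insert p {i. a \<le> i \<and> i < p \<and> W i = x}"
    using assms by (auto simp: A_def)
  ultimately show ?thesis by (simp add: occur_singleton_map_upt B_def)
qed

lemma no_power_across_last_occurrence:
  assumes per: "period_on W s z q" and "0 < q" "s + 2 * q \<le> z"
    and "s \<le> p" "a \<le> p" "p + n \<le> z" "0 < n"
    and "W p = x" and last: "\<And>j. p < j \<Longrightarrow> W j \<noteq> x"
    and once: "occur (map W [a..<p + n]) (map W [p..<p + n]) = 1"
    and "occur (map W [0..<a]) [x] \<le> occur (map W [a..<p]) [x]"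
  shows False
proof -
  have "z \<le> p + q"
    by (rule period_on_beyond_last_occurrence[OF per assms(4,8), of p]) (use assms(2) last in auto)
  then have "s + q \<le> p" using assms(3) by simp
  then have "p < a + q"
    using period_on_repeats_window[OF per] once assms(2,6) by (meson not_less)
  then show False
    using period_on_occur_singleton_less[OF per, of a p x] assms \<open>s + q \<le> p\<close> by simp
qed

lemma map_conc_upt_length:
  "map (conc u t) [0..<length u + n] = u @ map t [0..<n]"
  by (rule nth_equalityI) (auto simp: conc_def nth_append)

lemma map_conc_upt_beyond:
  assumes "length u \<le> s"
  shows "map (conc u t) [s..<z] = map t [s - length u..<z - length u]"
  using assms by (auto simp: conc_def intro!: nth_equalityI)

lemma conc_less:
  assumes "set u \<subseteq> {..<k}" "\<And>i. t i < k"
  shows "conc u t i < k"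
  using assms nth_mem[of i u] by (auto simp: conc_def subset_iff)

lemma map_conc_windows:
  assumes "g = map t [0..<length g]" "W = conc (w1 @ w2 @ [x]) t" "p = length (w1 @ w2)"
  shows "map W [0..<length w1] = w1" and "map W [length w1..<p] = w2"
    and "map W [length w1..<p + (length g + 2)] = w2 @ [x] @ g @ [t (length g)]"
    and "map W [p..<p + (length g + 2)] = [x] @ g @ [t (length g)]"
    and "map W [0..<p + length g + 1] = w1 @ w2 @ [x] @ g"
proof -
  have prefix: "map W [0..<p + (length g + 2)] = w1 @ w2 @ [x] @ g @ [t (length g)]"
    using map_conc_upt_length[of "w1 @ w2 @ [x]" t "length g + 1"] assms by simp
  note windows = map_upt_eq_take_drop[of _ "p + (length g + 2)" W]
  show "map W [0..<length w1] = w1" and "map W [length w1..<p] = w2"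
    and "map W [length w1..<p + (length g + 2)] = w2 @ [x] @ g @ [t (length g)]"
    and "map W [p..<p + (length g + 2)] = [x] @ g @ [t (length g)]"
    and "map W [0..<p + length g + 1] = w1 @ w2 @ [x] @ g"
    using windows[of "length w1" 0] windows[of p "length w1"] windows[of _ "length w1"]
      windows[of _ p] windows[of "p + length g + 1" 0]
    unfolding prefix by (simp_all add: assms(3) del: upt_Suc)
qed

lemma LinfR_intro:
  assumes "\<And>i. W i < k"
    and "\<And>s z r \<beta>. s \<le> z \<Longrightarrow> is_power r \<beta> (map W [s..<z]) \<Longrightarrow> exceeds \<beta> e \<Longrightarrow> False"
  shows "W \<in> LinfR k e"
  unfolding LinfR_def L_def power_free_def
proof (intro CollectI conjI allI impI)
  fix i j u r \<beta> assume "sublist u (map W [i..<j])" "is_power r \<beta> u"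
  then show "\<not> exceeds \<beta> e"
    using assms(2) by (elim sublist_map_upt) blast
qed (use assms(1) in auto)

lemma power_free_map_upt_window:
  assumes "power_free e (map W [0..<N])" "s \<le> z" "z \<le> N" "is_power r \<beta> (map W [s..<z])"
  shows "\<not> exceeds \<beta> e"
  using assms sublist_map_upt_upt[of 0 s z N W] unfolding power_free_def by blast

lemma LinfR_conc_window_beyond:
  assumes "t \<in> LinfR k e" "length u \<le> s" "is_power r \<beta> (map (conc u t) [s..<z])"
  shows "\<not> exceeds \<beta> e"
proof -
  have "power_free e (map t [s - length u..<z - length u])"
    using assms(1) by (simp add: LinfR_def L_def)
  then show ?thesis
    using assms(3) map_conc_upt_beyond[OF assms(2)] unfolding power_free_def
    by (metis sublist_order.order_refl)
qed

lemma Upsilon_exceeds_ge_2: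
  assumes "(k, e) \<in> Upsilon" "exceeds \<beta> e"
  shows "2 \<le> \<beta>"
  using assms by (auto simp: Upsilon_def exceeds_def)

theorem mainTheorem3:
  assumes "(k, e) \<in> Upsilon"
    and "(w1, w2, x, g, t) \<in> Gamma k e"
  shows "conc (w1 @ w2 @ [x]) t \<in> LinfR k e"
proof -
  define W p where "W = conc (w1 @ w2 @ [x]) t" and "p = length (w1 @ w2)"
  have alphabet: "set (w1 @ w2 @ [x]) \<subseteq> {..<k}" and prefix_in_L: "w1 @ w2 @ [x] @ g \<in> L k e"
    and t_in_LinfR: "t \<in> LinfR k e" and no_x: "\<And>i. t i \<noteq> x" and g_prefix_of_t: "g = map t [0..<length g]"
    and once: "occur (w2 @ [x] @ g @ [t (length g)]) ([x] @ g @ [t (length g)]) = 1"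
    and count: "occur w1 [x] \<le> occur w2 [x]"
    using assms(2) by (auto simp: Gamma_def Let_def)
  note windows = map_conc_windows[OF g_prefix_of_t W_def p_def]
  have "W p = x" and last: "\<And>j. p < j \<Longrightarrow> W j \<noteq> x"
    using no_x by (auto simp: W_def conc_def p_def nth_append)
  show ?thesis unfolding W_def[symmetric]
  proof (rule LinfR_intro)
    show "W i < k" for i
      using conc_less[OF alphabet] t_in_LinfR by (simp add: W_def LinfR_def)
  next
    fix s z r \<beta> assume "s \<le> z" and pow: "is_power r \<beta> (map W [s..<z])" and ex: "exceeds \<beta> e"
    have per: "period_on W s z (length r)" and "0 < length r" and len: "s + 2 * length r \<le> z"
      using is_power_period_on[OF pow] pow \<open>s \<le> z\<close>
        is_power_double_length_le[OF pow Upsilon_exceeds_ge_2[OF assms(1) ex]]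
      by (auto simp: is_power_def)
    consider "z \<le> p + length g + 1" | "p < s" | "s \<le> p" "p + (length g + 2) \<le> z" by linarith
    then show False
    proof cases
      case 1
      have "power_free e (map W [0..<p + length g + 1])"
        using prefix_in_L windows(5) by (simp add: L_def del: upt_Suc)
      then show False using power_free_map_upt_window 1 pow ex \<open>s \<le> z\<close> by blast
    next
      case 2
      then show False
        using LinfR_conc_window_beyond[OF t_in_LinfR _ pow[unfolded W_def]] ex by (simp add: p_def)
    next
      case 3
      show False
      proof (rule no_power_across_last_occurrence[where a = "length w1" and n = "length g + 2",
            OF per \<open>0 < length r\<close> len 3(1) _ 3(2) _ \<open>W p = x\<close> last])
        show "occur (map W [length w1..<p + (length g + 2)]) (map W [p..<p + (length g + 2)]) = 1"
          using once by (simp only: windows(3,4) append_Cons append_Nil)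
        show "occur (map W [0..<length w1]) [x] \<le> occur (map W [length w1..<p]) [x]"
          using count by (simp only: windows(1,2))
      qed (simp_all add: p_def)
    qed
  qed
qed

end
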